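(* Let $R$ be an associative ring with identity. The following are equivalent: (1) $R$ is NJ-symmetric; (2) for all $a,b,c\in R$, $abc\in N(R)$ implies $acb\in J(R)$; (3) for all $a,b,c\in R$, $abc\in N(R)$ implies $cba\in J(R)$.
   Context: $N(R)$ is the set of nilpotent elements of $R$ and $J(R)$ is the Jacobson radical of $R$. A ring $R$ is called NJ-symmetric if for all $a,b,c\in R$, $abc\in N(R)$ implies $bac\in J(R)$. *)

theory Defs
  imports Main
begin

definition nilpotents :: "'a::ring_1 set" where
  "nilpotents = {x. \<exists>n::nat. x ^ n = 0}"

definition left_ideal :: "'a::ring_1 set \<Rightarrow> bool" where
  "left_ideal I \<longleftrightarrow> 0 \<in> I \<and> (\<forall>x\<in>I. \<forall>y\<in>I. x - y \<in> I) \<and> (\<forall>r. \<forall>x\<in>I. r * x \<in> I)"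

definition maximal_left_ideal :: "'a::ring_1 set \<Rightarrow> bool" where
  "maximal_left_ideal M \<longleftrightarrow> left_ideal M \<and> M \<noteq> UNIV \<and>
     (\<forall>I. left_ideal I \<and> M \<subseteq> I \<and> I \<noteq> UNIV \<longrightarrow> I = M)"

definition jacobson :: "'a::ring_1 set" where
  "jacobson = \<Inter> {M. maximal_left_ideal M}"

definition NJ_symmetric :: "'a::ring_1 itself \<Rightarrow> bool" where
  "NJ_symmetric _ \<longleftrightarrow> (\<forall>a b c :: 'a. a * b * c \<in> nilpotents \<longrightarrow> b * a * c \<in> jacobson)"

end

theory Submission
  imports Defs
begin

text \<open>
  If \<open>xy\<close> is nilpotent then so is \<open>yx\<close>, since \<open>(yx)\<^sup>n\<^sup>+\<^sup>1 = y (xy)\<^sup>n x\<close>.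
  Hence \<open>abc \<in> N(R)\<close> is invariant under cyclic rotation of \<open>a, b, c\<close>, and each
  of the three conditions, applied to the rotation \<open>cab\<close>, yields the next one.
\<close>

lemma mult_power_commute: "(y::'a::ring_1) * (x * y) ^ n = (y * x) ^ n * y"
  by (induction n) (simp_all add: mult.assoc power_commutes)

lemma nilpotents_mult_commute:
  assumes "(x::'a::ring_1) * y \<in> nilpotents"
  shows "y * x \<in> nilpotents"
proof -
  from assms obtain n where "(x * y) ^ n = 0"
    by (auto simp: nilpotents_def)
  have "(y * x) ^ Suc n = (y * x) ^ n * y * x"
    by (simp only: power_Suc2 mult.assoc)
  also have "\<dots> = y * (x * y) ^ n * x"
    by (simp only: mult_power_commute)
  also have "\<dots> = 0"
    using \<open>(x * y) ^ n = 0\<close> by simp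
  finally show ?thesis
    unfolding nilpotents_def by blast
qed

lemma nilpotents_rotate:
  assumes "(a::'a::ring_1) * b * c \<in> nilpotents"
  shows "c * a * b \<in> nilpotents"
  using nilpotents_mult_commute[of "a * b" c] assms by (simp add: mult.assoc)

theorem proposition2p2:
  shows "(NJ_symmetric TYPE('a::ring_1) \<longrightarrow>
            (\<forall>a b c :: 'a. a * b * c \<in> nilpotents \<longrightarrow> a * c * b \<in> jacobson)) \<and>
         ((\<forall>a b c :: 'a. a * b * c \<in> nilpotents \<longrightarrow> a * c * b \<in> jacobson) \<longrightarrow>
            (\<forall>a b c :: 'a. a * b * c \<in> nilpotents \<longrightarrow> c * b * a \<in> jacobson)) \<and>
         ((\<forall>a b c :: 'a. a * b * c \<in> nilpotents \<longrightarrow> c * b * a \<in> jacobson) \<longrightarrow>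
            NJ_symmetric TYPE('a))"
proof (intro conjI impI allI)
  fix a b c :: 'a
  assume "a * b * c \<in> nilpotents"
  then have cab: "c * a * b \<in> nilpotents"
    by (rule nilpotents_rotate)
  show "a * c * b \<in> jacobson" if "NJ_symmetric TYPE('a)"
    using that cab unfolding NJ_symmetric_def by blast
  show "c * b * a \<in> jacobson"
    if "\<forall>a b c :: 'a. a * b * c \<in> nilpotents \<longrightarrow> a * c * b \<in> jacobson"
    using that cab by blast
next
  assume "\<forall>a b c :: 'a. a * b * c \<in> nilpotents \<longrightarrow> c * b * a \<in> jacobson"
  then show "NJ_symmetric TYPE('a)"
    unfolding NJ_symmetric_def using nilpotents_rotate by blast
qed

end
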